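(* Let $E$ be a Banach lattice. If $(x_m)$ is a disjoint sequence in $E$ such that $\{x_m\}$ is an almost Dunford–Pettis set, then $\{x_m\}$ is a Dunford–Pettis set.
   Context: A bounded subset $A$ of a Banach lattice $E$ is almost Dunford–Pettis if every disjoint weakly null sequence in $E'$ converges uniformly to zero on $A$. A bounded subset $A$ of a Banach space $X$ is Dunford–Pettis if every weakly null sequence $(x_n')$ in $X'$ converges uniformly to zero on $A$ (equivalently, $T(A)$ is relatively compact in $c_0$ for every weakly compact operator $T: X \to c_0$). *)

theory Defs
  imports "HOL-Analysis.Analysis"
begin

class banach_lattice = banach + ordered_real_vector + lattice +
  assumes lattice_norm: "sup x (- x) \<le> sup y (- y) \<Longrightarrow> norm x \<le> norm y"

definition lmod :: "'a::banach_lattice \<Rightarrow> 'a" where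
  "lmod x = sup x (- x)"

definition disjoint_elems :: "'a::banach_lattice \<Rightarrow> 'a \<Rightarrow> bool" where
  "disjoint_elems x y \<longleftrightarrow> inf (lmod x) (lmod y) = 0"

text \<open>The dual E' is the space of bounded linear functionals ('a \<Rightarrow>L real),
  with its canonical (Riesz-Kantorovich) lattice structure:
  for x \<ge> 0, |f|(x) = sup { |f y| : |y| \<le> x } and
  (g inf h)(x) = inf { g y + h (x - y) : 0 \<le> y \<le> x }.\<close>
definition dual_abs :: "('a::banach_lattice \<Rightarrow>\<^sub>L real) \<Rightarrow> 'a \<Rightarrow> real" where
  "dual_abs f x = Sup {\<bar>blinfun_apply f y\<bar> | y. lmod y \<le> x}"

definition disjoint_dual :: "('a::banach_lattice \<Rightarrow>\<^sub>L real) \<Rightarrow> ('a \<Rightarrow>\<^sub>L real) \<Rightarrow> bool" where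
  "disjoint_dual f g \<longleftrightarrow>
     (\<forall>x. 0 \<le> x \<longrightarrow> Inf {dual_abs f y + dual_abs g (x - y) | y. 0 \<le> y \<and> y \<le> x} = 0)"

definition weakly_null_dual :: "(nat \<Rightarrow> ('a::banach_lattice \<Rightarrow>\<^sub>L real)) \<Rightarrow> bool" where
  "weakly_null_dual f \<longleftrightarrow>
     (\<forall>\<phi> :: ('a \<Rightarrow>\<^sub>L real) \<Rightarrow>\<^sub>L real. (\<lambda>n. blinfun_apply \<phi> (f n)) \<longlonglongrightarrow> 0)"

definition unif_null_on :: "(nat \<Rightarrow> ('a::banach_lattice \<Rightarrow>\<^sub>L real)) \<Rightarrow> 'a set \<Rightarrow> bool" where
  "unif_null_on f A \<longleftrightarrow>
     (\<forall>e>0. \<forall>\<^sub>F n in sequentially. \<forall>x\<in>A. \<bar>blinfun_apply (f n) x\<bar> < e)"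

definition almost_DP_set :: "'a::banach_lattice set \<Rightarrow> bool" where
  "almost_DP_set A \<longleftrightarrow> bounded A \<and>
     (\<forall>f. (\<forall>i j. i \<noteq> j \<longrightarrow> disjoint_dual (f i) (f j)) \<and> weakly_null_dual f
          \<longrightarrow> unif_null_on f A)"

definition DP_set :: "'a::banach_lattice set \<Rightarrow> bool" where
  "DP_set A \<longleftrightarrow> bounded A \<and> (\<forall>f. weakly_null_dual f \<longrightarrow> unif_null_on f A)"

end

(* Let (f_n) be weakly null in E' but not uniformly null on {x_m}. A diagonal argument gives
   increasing n_k, m_k and e > 0 with |f_{n_k}(x_{m_k})| >= e. Let P_k h be the component of a
   functional h carried by u_k = |x_{m_k}|; for positive h it is z |-> sup_t h(z inf t u_k) on the
   positive cone. The u_k are pairwise disjoint, hence so are the g_k = P_k f_{n_k}, and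
   g_k(x_{m_k}) = f_{n_k}(x_{m_k}). Disjointness also gives sum_k |phi(P_k h)| <= 3 |phi| |h| for
   every phi in E'', and a gliding hump argument turns this into weak nullness of (g_k). The almost
   Dunford-Pettis property then makes g_k tend to 0 uniformly on {x_m}, a contradiction. *)

theory Submission
  imports Defs "HOL-Library.Lattice_Algebras"
begin

subclass (in banach_lattice) lattice_ab_group_add ..

section \<open>Vector lattices\<close>

lemma zero_le_sup_uminus: "0 \<le> sup (x::'a::lattice_ab_group_add) (- x)"
proof -
  have "0 = x + - x" by simp
  also have "\<dots> \<le> sup x (- x) + sup x (- x)" by (intro add_mono) auto
  finally show ?thesis by simp
qed

lemma lmod_nonneg: "0 \<le> lmod (x::'a::banach_lattice)"
  unfolding lmod_def by (rule zero_le_sup_uminus)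

lemma lmod_eq_self: "0 \<le> (x::'a::banach_lattice) \<Longrightarrow> lmod x = x"
  unfolding lmod_def by (simp add: sup_absorb1 order_trans[of "- x" 0 x])

lemma inf_pprt_uminus_nprt: "inf (pprt x) (- nprt x) = (0::'a::lattice_ab_group_add)"
proof -
  have "pprt x - x = sup x 0 + - x" unfolding pprt_def by simp
  also have "\<dots> = sup (x + - x) (0 + - x)" by (rule add_sup_distrib_right)
  also have "\<dots> = - nprt x" unfolding nprt_def by (simp add: neg_inf_eq_sup sup_commute)
  finally have "- nprt x = pprt x - x" ..
  have "inf (pprt x) (pprt x - x) = pprt x + inf 0 (- x)"
    by (simp add: add_inf_distrib_left)
  also have "inf 0 (- x) = - pprt x"
    unfolding pprt_def by (simp add: neg_sup_eq_inf inf_commute)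
  finally show ?thesis using \<open>- nprt x = pprt x - x\<close> by simp
qed

lemma lmod_prts: "lmod (x::'a::banach_lattice) = pprt x + - nprt x"
proof -
  have "lmod x = sup (sup x (- x)) 0"
    unfolding lmod_def by (simp add: sup_absorb1 zero_le_sup_uminus)
  also have "\<dots> = sup (pprt x) (- nprt x)"
    unfolding pprt_def nprt_def neg_inf_eq_sup by (simp add: sup_aci)
  also have "\<dots> = pprt x + - nprt x"
    using add_eq_inf_sup[of "pprt x" "- nprt x"] inf_pprt_uminus_nprt[of x] by simp
  finally show ?thesis .
qed

lemma pprt_le_lmod: "pprt x \<le> lmod (x::'a::banach_lattice)"
  unfolding lmod_prts by (simp add: nprt_le_zero)

lemma uminus_nprt_le_lmod: "- nprt x \<le> lmod (x::'a::banach_lattice)"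
  unfolding lmod_prts by simp

lemma norm_le_norm_if_lmod_le: "lmod y \<le> (x::'a::banach_lattice) \<Longrightarrow> norm y \<le> norm x"
proof -
  assume "lmod y \<le> x"
  moreover have "lmod x = x"
    using \<open>lmod y \<le> x\<close> lmod_nonneg order_trans lmod_eq_self by blast
  ultimately show ?thesis
    using lattice_norm[of y x] unfolding lmod_def by simp
qed

lemma norm_mono_nonneg: "0 \<le> (y::'a::banach_lattice) \<Longrightarrow> y \<le> x \<Longrightarrow> norm y \<le> norm x"
  by (simp add: lmod_eq_self norm_le_norm_if_lmod_le)

lemma norm_lmod: "norm (lmod (x::'a::banach_lattice)) = norm x"
proof -
  have "lmod (lmod x) = lmod x" by (simp add: lmod_nonneg lmod_eq_self)
  then show ?thesis
    using lattice_norm[of "lmod x" x] lattice_norm[of x "lmod x"] unfolding lmod_def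
    by (simp add: order_antisym)
qed

lemma inf_add_le_add_inf:
  fixes a b w :: "'a::lattice_ab_group_add"
  assumes "0 \<le> a" "0 \<le> b" "0 \<le> w"
  shows "inf w (a + b) \<le> inf w a + inf w b"
proof -
  have "inf w a + inf w b = inf (inf (a + b) (a + w)) (inf (w + b) (w + w))"
    by (simp add: add_inf_distrib_left add_inf_distrib_right inf_aci)
  moreover have "w \<le> a + w" "w \<le> w + b" "w \<le> w + w"
    using assms by (simp_all add: add_increasing add_increasing2)
  then have "inf w (a + b) \<le> inf (inf (a + b) (a + w)) (inf (w + b) (w + w))"
    by (meson inf.cobounded1 inf.cobounded2 le_inf_iff order_trans)
  ultimately show ?thesis by simp
qed

lemma inf_add_disjoint:
  fixes a b z :: "'a::lattice_ab_group_add"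
  assumes "0 \<le> a" "0 \<le> b" "inf a b = 0" "0 \<le> z"
  shows "inf z (a + b) = inf z a + inf z b"
proof (rule antisym)
  show "inf z (a + b) \<le> inf z a + inf z b"
    using inf_add_le_add_inf[OF assms(1,2,4)] .
  have "inf (inf z a) (inf z b) \<le> inf a b"
    by (intro inf_mono) auto
  then have "inf (inf z a) (inf z b) = 0"
    using assms by (intro antisym) simp_all
  then have "inf z a + inf z b = sup (inf z a) (inf z b)"
    using add_eq_inf_sup[of "inf z a" "inf z b"] by simp
  then have "inf z a + inf z b \<le> z" by simp
  moreover have "inf z a + inf z b \<le> a + b" by (intro add_mono) auto
  ultimately show "inf z a + inf z b \<le> inf z (a + b)" by simp
qed

lemma inf_sum_disjoint:
  fixes w :: "'i \<Rightarrow> 'a::lattice_ab_group_add"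
  assumes "finite F" "\<And>k. k \<in> F \<Longrightarrow> 0 \<le> w k"
    and "\<And>i j. i \<in> F \<Longrightarrow> j \<in> F \<Longrightarrow> i \<noteq> j \<Longrightarrow> inf (w i) (w j) = 0"
    and "0 \<le> z"
  shows "inf z (\<Sum>k\<in>F. w k) = (\<Sum>k\<in>F. inf z (w k))"
  using assms
proof (induction F arbitrary: z rule: finite_induct)
  case empty
  then show ?case by (simp add: inf_absorb2)
next
  case (insert k F)
  note nonneg = insert.prems(1) and disjoint = insert.prems(2)
  have IH: "inf y (sum w F) = (\<Sum>j\<in>F. inf y (w j))" if "0 \<le> y" for y
    by (rule insert.IH) (use nonneg disjoint that in auto)
  have "inf (w k) (sum w F) = (\<Sum>j\<in>F. inf (w k) (w j))"
    using nonneg by (intro IH) simp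
  also have "\<dots> = 0"
    using insert.hyps disjoint by (intro sum.neutral ballI) (metis insertCI)
  finally have "inf z (w k + sum w F) = inf z (w k) + inf z (sum w F)"
    using nonneg insert.prems(3) by (intro inf_add_disjoint sum_nonneg) auto
  then show ?case
    using insert.hyps IH[OF insert.prems(3)] by simp
qed

lemma scaleR_inf_distrib:
  fixes x y :: "'a::{ordered_real_vector,lattice}"
  assumes "0 < c"
  shows "c *\<^sub>R inf x y = inf (c *\<^sub>R x) (c *\<^sub>R y)"
proof (rule antisym)
  show "c *\<^sub>R inf x y \<le> inf (c *\<^sub>R x) (c *\<^sub>R y)"
    using assms by (intro le_infI scaleR_left_mono) auto
  let ?m = "inf (c *\<^sub>R x) (c *\<^sub>R y)"
  have "inverse c *\<^sub>R ?m \<le> inverse c *\<^sub>R (c *\<^sub>R x)"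
    and "inverse c *\<^sub>R ?m \<le> inverse c *\<^sub>R (c *\<^sub>R y)"
    using assms by (intro scaleR_left_mono; simp)+
  then have "inverse c *\<^sub>R ?m \<le> inf x y"
    using assms by simp
  then have "c *\<^sub>R (inverse c *\<^sub>R ?m) \<le> c *\<^sub>R inf x y"
    using assms by (intro scaleR_left_mono) auto
  then show "inf (c *\<^sub>R x) (c *\<^sub>R y) \<le> c *\<^sub>R inf x y"
    using assms by simp
qed

lemma inf_scaleR_disjoint:
  fixes u v :: "'a::{ordered_real_vector,lattice}"
  assumes "0 \<le> u" "0 \<le> v" "inf u v = 0" "0 \<le> s" "0 \<le> t"
  shows "inf (s *\<^sub>R u) (t *\<^sub>R v) = 0"
proof (rule antisym)
  define c where "c = s + t + 1"
  have c: "0 < c" "s \<le> c" "t \<le> c" using assms unfolding c_def by auto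
  have "inf (s *\<^sub>R u) (t *\<^sub>R v) \<le> inf (c *\<^sub>R u) (c *\<^sub>R v)"
    using assms c by (intro inf_mono scaleR_right_mono)
  also have "\<dots> = c *\<^sub>R inf u v" by (rule scaleR_inf_distrib[OF c(1), symmetric])
  finally show "inf (s *\<^sub>R u) (t *\<^sub>R v) \<le> 0" using assms by simp
  show "0 \<le> inf (s *\<^sub>R u) (t *\<^sub>R v)" using assms by (simp add: scaleR_nonneg_nonneg)
qed

lemma riesz_decomposition:
  fixes y a b :: "'a::lattice_ab_group_add"
  assumes "0 \<le> y" "y \<le> a + b" "0 \<le> a" "0 \<le> b"
  obtains y1 y2 where "y = y1 + y2" "0 \<le> y1" "y1 \<le> a" "0 \<le> y2" "y2 \<le> b"
proof
  show "y = inf y a + (y - inf y a)" by (metis add.commute diff_add_cancel)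
  show "0 \<le> inf y a" "inf y a \<le> a" using assms by auto
  show "0 \<le> y - inf y a" using inf_le1[of y a] by (simp only: diff_ge_0_iff_ge)
  have "y - inf y a = sup (y + - y) (y + - a)"
    by (simp only: diff_inf_eq_sup add_sup_distrib_left)
  also have "\<dots> = sup 0 (y - a)" by simp
  also have "\<dots> \<le> b" using assms by (simp add: add.commute diff_le_eq)
  finally show "y - inf y a \<le> b" .
qed

definition positive_functional :: "('a::banach_lattice \<Rightarrow>\<^sub>L real) \<Rightarrow> bool" where
  "positive_functional p \<longleftrightarrow> (\<forall>x. 0 \<le> x \<longrightarrow> 0 \<le> p x)"

lemma positive_functionalD: "positive_functional p \<Longrightarrow> 0 \<le> x \<Longrightarrow> 0 \<le> p x"
  unfolding positive_functional_def by blast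

lemma positive_functional_mono: "positive_functional p \<Longrightarrow> x \<le> y \<Longrightarrow> p x \<le> p y"
  using positive_functionalD[of p "y - x"] by (simp add: blinfun.diff_right)

lemma positive_functional_add:
  "positive_functional p \<Longrightarrow> positive_functional q \<Longrightarrow> positive_functional (p + q)"
  unfolding positive_functional_def by (simp add: plus_blinfun.rep_eq)

lemma positive_functional_scaleR: "positive_functional p \<Longrightarrow> 0 \<le> c \<Longrightarrow> positive_functional (c *\<^sub>R p)"
  unfolding positive_functional_def by (simp add: blinfun.scaleR_left)

lemma blinfun_apply_prts: "blinfun_apply f y = f (pprt y) - f (- nprt y)"
  by (metis blinfun.add_right blinfun.minus_right diff_minus_eq_add prts)

lemma positive_functional_abs_le:
  assumes "positive_functional p"
  shows "\<bar>p y\<bar> \<le> p (lmod y)"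
proof -
  have "0 \<le> p (pprt y)" "0 \<le> p (- nprt y)"
    using assms by (simp_all add: positive_functionalD)
  then show ?thesis
    using blinfun_apply_prts[of p y] unfolding lmod_prts blinfun.add_right
    by linarith
qed

lemma blinfun_eq_on_nonneg:
  fixes f g :: "'a::banach_lattice \<Rightarrow>\<^sub>L real"
  assumes "\<And>a. 0 \<le> a \<Longrightarrow> f a = g a"
  shows "f = g"
proof (rule blinfun_eqI)
  show "f y = g y" for y
    using assms[of "pprt y"] assms[of "- nprt y"] blinfun_apply_prts[of f y]
      blinfun_apply_prts[of g y]
    by simp
qed

definition cone_extension :: "('a::banach_lattice \<Rightarrow> real) \<Rightarrow> 'a \<Rightarrow>\<^sub>L real" where
  "cone_extension S = Blinfun (\<lambda>y. S (pprt y) - S (- nprt y))"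

locale cone_functional =
  fixes S :: "'a::banach_lattice \<Rightarrow> real" and K :: real
  assumes add: "\<And>a b. 0 \<le> a \<Longrightarrow> 0 \<le> b \<Longrightarrow> S (a + b) = S a + S b"
    and scaleR: "\<And>c a. 0 \<le> c \<Longrightarrow> 0 \<le> a \<Longrightarrow> S (c *\<^sub>R a) = c * S a"
    and nonneg: "\<And>a. 0 \<le> a \<Longrightarrow> 0 \<le> S a"
    and bounded: "\<And>a. 0 \<le> a \<Longrightarrow> S a \<le> K * norm a"
begin

abbreviation ext :: "'a \<Rightarrow> real" where
  "ext y \<equiv> S (pprt y) - S (- nprt y)"

lemma ext_diff:
  assumes "0 \<le> a" "0 \<le> b"
  shows "ext (a - b) = S a - S b"
proof -
  have "a - b = pprt (a - b) - (- nprt (a - b))"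
    unfolding diff_minus_eq_add by (rule prts)
  then have "pprt (a - b) + b = a + - nprt (a - b)"
    by (simp add: algebra_simps)
  then have "S (pprt (a - b)) + S b = S a + S (- nprt (a - b))"
    using assms add by (metis zero_le_pprt neg_0_le_iff_le nprt_le_zero)
  then show ?thesis by linarith
qed

lemma ext_add: "ext (y + z) = ext y + ext z"
proof -
  have "(pprt y + pprt z) - (- nprt y + - nprt z) = (pprt y + nprt y) + (pprt z + nprt z)"
    by (simp add: algebra_simps)
  then have yz: "y + z = (pprt y + pprt z) - (- nprt y + - nprt z)"
    by (simp only: prts[symmetric])
  have "ext (y + z) = S (pprt y + pprt z) - S (- nprt y + - nprt z)"
    by (subst (1 2) yz, rule ext_diff; intro add_nonneg_nonneg) simp_all
  also have "\<dots> = ext y + ext z"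
    using add[of "pprt y" "pprt z"] add[of "- nprt y" "- nprt z"] by simp
  finally show ?thesis .
qed

lemma ext_scaleR: "ext (c *\<^sub>R y) = c *\<^sub>R ext y"
proof -
  have nonneg_case: "ext (c *\<^sub>R y) = c * ext y" if "0 \<le> c" for c y
  proof -
    have cy: "c *\<^sub>R y = c *\<^sub>R pprt y - c *\<^sub>R (- nprt y)"
      by (metis scaleR_add_right scaleR_minus_right diff_minus_eq_add prts)
    have "ext (c *\<^sub>R y) = S (c *\<^sub>R pprt y) - S (c *\<^sub>R (- nprt y))"
      by (subst (1 2) cy, rule ext_diff; intro scaleR_nonneg_nonneg) (simp_all add: that)
    then show ?thesis
      using scaleR[OF that, of "pprt y"] scaleR[OF that, of "- nprt y"]
      by (simp add: right_diff_distrib)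
  qed
  show ?thesis
  proof (cases "0 \<le> c")
    case False
    then have "ext ((- c) *\<^sub>R y) = - c * ext y"
      by (intro nonneg_case) simp
    then show ?thesis
      by (simp add: pprt_neg nprt_neg)
  qed (simp add: nonneg_case)
qed

lemma ext_bounded: "norm (ext y) \<le> norm y * K"
proof -
  have "S (lmod y) = S (pprt y) + S (- nprt y)"
    unfolding lmod_prts by (rule add) simp_all
  moreover have "S (lmod y) \<le> K * norm y"
    using bounded[OF lmod_nonneg[of y]] by (simp only: norm_lmod)
  ultimately show ?thesis
    using nonneg[of "pprt y"] nonneg[of "- nprt y"] by (simp add: mult.commute)
qed

lemma cone_extension_apply: "cone_extension S y = ext y"
  using bounded_linear_Blinfun_apply[OF bounded_linear_intro[OF ext_add ext_scaleR ext_bounded]]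
  by (simp add: cone_extension_def)

lemma cone_extension_eq: "0 \<le> a \<Longrightarrow> cone_extension S a = S a"
  using ext_diff[of a 0] add[of 0 0] by (simp add: cone_extension_apply)

lemma positive_functional_cone_extension: "positive_functional (cone_extension S)"
  unfolding positive_functional_def by (simp add: cone_extension_eq nonneg)

end

section \<open>Positive and negative parts of a functional\<close>

text \<open>Riesz--Kantorovich formula: \<open>h\<^sup>+ x = sup h[0, x]\<close> for \<open>x \<ge> 0\<close>.\<close>

definition sup_on_interval :: "('a::banach_lattice \<Rightarrow>\<^sub>L real) \<Rightarrow> 'a \<Rightarrow> real" where
  "sup_on_interval h x = Sup (blinfun_apply h ` {0..x})"

context
  fixes h :: "'a::banach_lattice \<Rightarrow>\<^sub>L real"
begin

lemma le_norm_on_interval: "y \<in> {0..x} \<Longrightarrow> h y \<le> norm h * norm x"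
proof -
  assume "y \<in> {0..x}"
  have "h y \<le> norm h * norm y" using norm_blinfun[of h y] by simp
  also have "\<dots> \<le> norm h * norm x"
    using norm_mono_nonneg[of y x] \<open>y \<in> {0..x}\<close> by (simp add: mult_left_mono)
  finally show ?thesis .
qed

lemma sup_on_interval_upper: "y \<in> {0..x} \<Longrightarrow> h y \<le> sup_on_interval h x"
  unfolding sup_on_interval_def
  by (rule cSup_upper) (auto intro: bdd_aboveI2 le_norm_on_interval)

lemma sup_on_interval_least:
  "0 \<le> x \<Longrightarrow> (\<And>y. y \<in> {0..x} \<Longrightarrow> h y \<le> B) \<Longrightarrow> sup_on_interval h x \<le> B"
  unfolding sup_on_interval_def by (rule cSup_least) auto

lemma sup_on_interval_nonneg: "0 \<le> x \<Longrightarrow> 0 \<le> sup_on_interval h x"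
  using sup_on_interval_upper[of 0 x] by simp

lemma sup_on_interval_le_norm: "0 \<le> x \<Longrightarrow> sup_on_interval h x \<le> norm h * norm x"
  by (intro sup_on_interval_least le_norm_on_interval)

lemma sup_on_interval_add:
  assumes a: "0 \<le> a" and b: "0 \<le> b"
  shows "sup_on_interval h (a + b) = sup_on_interval h a + sup_on_interval h b"
proof (rule antisym)
  show "sup_on_interval h (a + b) \<le> sup_on_interval h a + sup_on_interval h b"
  proof (rule sup_on_interval_least)
    fix y assume "y \<in> {0..a + b}"
    then obtain y1 y2 where "y = y1 + y2" "y1 \<in> {0..a}" "y2 \<in> {0..b}"
      using riesz_decomposition[OF _ _ a b] by (metis atLeastAtMost_iff)
    then show "h y \<le> sup_on_interval h a + sup_on_interval h b"
      by (simp add: blinfun.add_right add_mono sup_on_interval_upper)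
  qed (use a b in simp)
  have "h y1 + h y2 \<le> sup_on_interval h (a + b)" if "y1 \<in> {0..a}" "y2 \<in> {0..b}" for y1 y2
    using that by (auto simp: blinfun.add_right[symmetric] intro!: sup_on_interval_upper add_mono)
  then have "sup_on_interval h a \<le> sup_on_interval h (a + b) - h y2" if "y2 \<in> {0..b}" for y2
    using that a by (intro sup_on_interval_least) (auto simp: le_diff_eq)
  then have "sup_on_interval h b \<le> sup_on_interval h (a + b) - sup_on_interval h a"
    using b by (intro sup_on_interval_least) (auto simp: le_diff_eq add.commute)
  then show "sup_on_interval h a + sup_on_interval h b \<le> sup_on_interval h (a + b)"
    by simp
qed

lemma sup_on_interval_scaleR:
  assumes c: "0 \<le> c" and a: "0 \<le> a"
  shows "sup_on_interval h (c *\<^sub>R a) = c * sup_on_interval h a"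
proof (cases "c = 0")
  case True
  then show ?thesis by (simp add: sup_on_interval_def)
next
  case False
  with c have c: "0 < c" by simp
  have interval: "(\<lambda>y. c *\<^sub>R y) ` {0..a} = {0..c *\<^sub>R a}"
  proof safe
    fix y assume "y \<in> {0..c *\<^sub>R a}"
    then have "inverse c *\<^sub>R y \<in> {0..a}"
      using c scaleR_left_mono[of y "c *\<^sub>R a" "inverse c"] by (auto intro: scaleR_nonneg_nonneg)
    then show "y \<in> (\<lambda>y. c *\<^sub>R y) ` {0..a}"
      using c by (intro image_eqI[of _ _ "inverse c *\<^sub>R y"]) auto
  qed (use c in \<open>auto intro: scaleR_left_mono scaleR_nonneg_nonneg\<close>)
  have "blinfun_apply h ` {0..c *\<^sub>R a} = (\<lambda>r. c * r) ` (blinfun_apply h ` {0..a})"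
    unfolding interval[symmetric] by (simp add: image_image blinfun.scaleR_right)
  moreover have "bdd_above (blinfun_apply h ` {0..a})"
    by (auto intro: bdd_aboveI2 le_norm_on_interval)
  moreover have "mono (\<lambda>r. c * r)"
    using c by (simp add: mono_def mult_left_mono)
  ultimately show ?thesis
    using continuous_at_Sup_mono[of "\<lambda>r. c * r" "blinfun_apply h ` {0..a}"] a
    unfolding sup_on_interval_def by (simp add: continuous_intros)
qed

end

definition blinfun_pos :: "('a::banach_lattice \<Rightarrow>\<^sub>L real) \<Rightarrow> 'a \<Rightarrow>\<^sub>L real" where
  "blinfun_pos h = cone_extension (sup_on_interval h)"

definition blinfun_neg :: "('a::banach_lattice \<Rightarrow>\<^sub>L real) \<Rightarrow> 'a \<Rightarrow>\<^sub>L real" where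
  "blinfun_neg h = blinfun_pos h - h"

definition blinfun_abs :: "('a::banach_lattice \<Rightarrow>\<^sub>L real) \<Rightarrow> 'a \<Rightarrow>\<^sub>L real" where
  "blinfun_abs h = blinfun_pos h + blinfun_neg h"

lemma cone_functional_sup_on_interval: "cone_functional (sup_on_interval h) (norm h)"
  by unfold_locales
    (simp_all add: sup_on_interval_add sup_on_interval_scaleR sup_on_interval_nonneg
      sup_on_interval_le_norm)

lemma positive_functional_blinfun_pos: "positive_functional (blinfun_pos h)"
  unfolding blinfun_pos_def
  by (rule cone_functional.positive_functional_cone_extension[OF cone_functional_sup_on_interval])

lemma blinfun_pos_eq: "0 \<le> a \<Longrightarrow> blinfun_pos h a = sup_on_interval h a"
  unfolding blinfun_pos_def
  by (rule cone_functional.cone_extension_eq[OF cone_functional_sup_on_interval])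

lemma positive_functional_blinfun_neg: "positive_functional (blinfun_neg h)"
  unfolding positive_functional_def blinfun_neg_def
  by (auto simp: blinfun_pos_eq minus_blinfun.rep_eq intro: sup_on_interval_upper)

lemma blinfun_pos_minus_neg: "blinfun_pos h - blinfun_neg h = h"
  unfolding blinfun_neg_def by simp

lemma positive_functional_blinfun_abs: "positive_functional (blinfun_abs h)"
  unfolding blinfun_abs_def
  by (intro positive_functional_add positive_functional_blinfun_pos positive_functional_blinfun_neg)

lemma blinfun_abs_le: "0 \<le> a \<Longrightarrow> blinfun_abs h a \<le> 3 * norm h * norm a"
proof -
  assume a: "0 \<le> a"
  have "blinfun_abs h a = 2 * sup_on_interval h a - h a"
    unfolding blinfun_abs_def blinfun_neg_def
    using a by (simp add: plus_blinfun.rep_eq minus_blinfun.rep_eq blinfun_pos_eq)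
  moreover have "sup_on_interval h a \<le> norm h * norm a"
    using a by (rule sup_on_interval_le_norm)
  moreover have "- h a \<le> norm h * norm a"
    using norm_blinfun[of h a] by simp
  ultimately show ?thesis by linarith
qed

section \<open>Band components of functionals\<close>

text \<open>For \<open>u \<ge> 0\<close> and a positive functional \<open>p\<close>, \<open>band_sup u p\<close> is on the positive cone
  the component of \<open>p\<close> carried by \<open>u\<close>.\<close>

definition band_sup :: "'a::banach_lattice \<Rightarrow> ('a \<Rightarrow>\<^sub>L real) \<Rightarrow> 'a \<Rightarrow> real" where
  "band_sup u p z = Sup ((\<lambda>t. p (inf z (t *\<^sub>R u))) ` {0..})"

context
  fixes u :: "'a::banach_lattice" and p :: "'a \<Rightarrow>\<^sub>L real"
  assumes u: "0 \<le> u" and p: "positive_functional p"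
begin

lemma band_sup_term_mono: "s \<le> t \<Longrightarrow> p (inf z (s *\<^sub>R u)) \<le> p (inf z (t *\<^sub>R u))"
  by (intro positive_functional_mono[OF p] inf_mono order_refl scaleR_right_mono u)

lemma bdd_above_band_sup: "bdd_above ((\<lambda>t. p (inf z (t *\<^sub>R u))) ` {0..})"
  by (rule bdd_aboveI2[where M = "p z"]) (simp add: positive_functional_mono[OF p])

lemma band_sup_upper: "0 \<le> t \<Longrightarrow> p (inf z (t *\<^sub>R u)) \<le> band_sup u p z"
  unfolding band_sup_def by (rule cSup_upper) (auto intro: bdd_above_band_sup)

lemma band_sup_least: "(\<And>t. 0 \<le> t \<Longrightarrow> p (inf z (t *\<^sub>R u)) \<le> B) \<Longrightarrow> band_sup u p z \<le> B"
  unfolding band_sup_def by (rule cSup_least) auto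

lemma band_sup_nonneg: "0 \<le> z \<Longrightarrow> 0 \<le> band_sup u p z"
  using band_sup_upper[of 0 z] by (simp add: inf_absorb2)

lemma band_sup_le: "band_sup u p z \<le> p z"
  by (rule band_sup_least) (simp add: positive_functional_mono[OF p])

lemma band_sup_mono:
  assumes "a \<le> b"
  shows "band_sup u p a \<le> band_sup u p b"
proof (rule band_sup_least)
  fix t :: real assume "0 \<le> t"
  have "p (inf a (t *\<^sub>R u)) \<le> p (inf b (t *\<^sub>R u))"
    using assms by (intro positive_functional_mono[OF p] inf_mono) simp_all
  also have "\<dots> \<le> band_sup u p b" using \<open>0 \<le> t\<close> by (rule band_sup_upper)
  finally show "p (inf a (t *\<^sub>R u)) \<le> band_sup u p b" .
qed

lemma band_sup_eq_self: "0 \<le> s \<Longrightarrow> z \<le> s *\<^sub>R u \<Longrightarrow> band_sup u p z = p z"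
  using band_sup_upper[of s z] band_sup_le[of z] by (simp add: inf_absorb1)

lemma band_sup_eq_zero:
  assumes v: "0 \<le> v" "inf u v = 0" and z: "0 \<le> z" "0 \<le> s" "z \<le> s *\<^sub>R v"
  shows "band_sup u p z = 0"
proof (rule antisym[OF band_sup_least band_sup_nonneg[OF z(1)]])
  fix t :: real assume t: "0 \<le> t"
  have "inf z (t *\<^sub>R u) \<le> inf (t *\<^sub>R u) (s *\<^sub>R v)"
    using z(3) by (auto intro: le_infI order_trans[OF inf_le1])
  also have "\<dots> = 0" by (rule inf_scaleR_disjoint[OF u v t z(2)])
  finally have "inf z (t *\<^sub>R u) = 0"
    using z(1) u t by (intro antisym) (simp_all add: scaleR_nonneg_nonneg)
  then show "p (inf z (t *\<^sub>R u)) \<le> 0" by simp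
qed

lemma band_sup_tendsto: "(\<lambda>n. p (inf z (real n *\<^sub>R u))) \<longlonglongrightarrow> band_sup u p z"
proof (rule LIMSEQ_I)
  fix r :: real assume "0 < r"
  have ne: "(\<lambda>t. p (inf z (t *\<^sub>R u))) ` {0..} \<noteq> {}" by simp
  have "\<exists>x\<in>(\<lambda>t. p (inf z (t *\<^sub>R u))) ` {0..}. band_sup u p z - r < x"
    unfolding less_cSup_iff[OF ne bdd_above_band_sup, symmetric] band_sup_def[symmetric]
    using \<open>0 < r\<close> by simp
  then obtain t where t: "0 \<le> t" "band_sup u p z - r < p (inf z (t *\<^sub>R u))"
    by auto
  have "norm (p (inf z (real n *\<^sub>R u)) - band_sup u p z) < r" if "nat \<lceil>t\<rceil> \<le> n" for n
  proof -
    have "t \<le> real n" using that by linarith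
    then show ?thesis
      using t band_sup_term_mono[of t "real n" z] band_sup_upper[of "real n" z] by simp
  qed
  then show "\<exists>N. \<forall>n\<ge>N. norm (p (inf z (real n *\<^sub>R u)) - band_sup u p z) < r"
    by blast
qed

lemma band_sup_add:
  assumes a: "0 \<le> a" and b: "0 \<le> b"
  shows "band_sup u p (a + b) = band_sup u p a + band_sup u p b"
proof (rule antisym)
  show "band_sup u p (a + b) \<le> band_sup u p a + band_sup u p b"
  proof (rule band_sup_least)
    fix t :: real assume t: "0 \<le> t"
    have "p (inf (a + b) (t *\<^sub>R u)) \<le> p (inf a (t *\<^sub>R u) + inf b (t *\<^sub>R u))"
      using inf_add_le_add_inf[OF a b scaleR_nonneg_nonneg[OF t u]]
      by (intro positive_functional_mono[OF p]) (simp add: inf_commute)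
    also have "\<dots> \<le> band_sup u p a + band_sup u p b"
      by (simp add: blinfun.add_right add_mono band_sup_upper t)
    finally show "p (inf (a + b) (t *\<^sub>R u)) \<le> band_sup u p a + band_sup u p b" .
  qed
  have sum_le: "p (inf a (s *\<^sub>R u)) + p (inf b (t *\<^sub>R u)) \<le> band_sup u p (a + b)"
    if "0 \<le> s" "0 \<le> t" for s t
  proof -
    have "p (inf a (s *\<^sub>R u)) + p (inf b (t *\<^sub>R u))
        \<le> p (inf a ((s + t) *\<^sub>R u)) + p (inf b ((s + t) *\<^sub>R u))"
      using that by (intro add_mono band_sup_term_mono) simp_all
    also have "\<dots> = p (inf a ((s + t) *\<^sub>R u) + inf b ((s + t) *\<^sub>R u))"
      by (simp add: blinfun.add_right)
    also have "\<dots> \<le> p (inf (a + b) ((2 * (s + t)) *\<^sub>R u))"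
    proof (intro positive_functional_mono[OF p] le_infI)
      show "inf a ((s + t) *\<^sub>R u) + inf b ((s + t) *\<^sub>R u) \<le> a + b"
        by (intro add_mono inf_le1)
      have "inf a ((s + t) *\<^sub>R u) + inf b ((s + t) *\<^sub>R u) \<le> (s + t) *\<^sub>R u + (s + t) *\<^sub>R u"
        by (intro add_mono inf_le2)
      then show "inf a ((s + t) *\<^sub>R u) + inf b ((s + t) *\<^sub>R u) \<le> (2 * (s + t)) *\<^sub>R u"
        by (simp add: scaleR_add_left[symmetric])
    qed
    also have "\<dots> \<le> band_sup u p (a + b)"
      using that by (intro band_sup_upper) simp
    finally show ?thesis .
  qed
  have "band_sup u p a \<le> band_sup u p (a + b) - p (inf b (t *\<^sub>R u))" if "0 \<le> t" for t
    using sum_le[OF _ that] by (intro band_sup_least) (simp add: le_diff_eq)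
  then have "band_sup u p b \<le> band_sup u p (a + b) - band_sup u p a"
    by (intro band_sup_least) (simp add: le_diff_eq add.commute)
  then show "band_sup u p a + band_sup u p b \<le> band_sup u p (a + b)"
    by simp
qed

lemma band_sup_scaleR:
  assumes c: "0 \<le> c" and a: "0 \<le> a"
  shows "band_sup u p (c *\<^sub>R a) = c * band_sup u p a"
proof (cases "c = 0")
  case True
  then show ?thesis
    using band_sup_eq_self[of 0 0] by simp
next
  case False
  with c have c: "0 < c" by simp
  have rescale: "p (inf (c *\<^sub>R a) (t *\<^sub>R u)) = c * p (inf a ((t / c) *\<^sub>R u))" for t
  proof -
    have eq: "c *\<^sub>R inf a ((t / c) *\<^sub>R u) = inf (c *\<^sub>R a) (t *\<^sub>R u)"
      using scaleR_inf_distrib[OF c, of a "(t / c) *\<^sub>R u"] c by simp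
    show ?thesis by (subst eq[symmetric]) (simp add: blinfun.scaleR_right)
  qed
  show ?thesis
  proof (rule antisym)
    show "band_sup u p (c *\<^sub>R a) \<le> c * band_sup u p a"
      using c by (intro band_sup_least) (simp add: rescale band_sup_upper mult_left_mono)
    have "p (inf a (t *\<^sub>R u)) \<le> band_sup u p (c *\<^sub>R a) / c" if "0 \<le> t" for t
      using band_sup_upper[of "c * t" "c *\<^sub>R a"] that c by (simp add: rescale field_simps)
    then have "band_sup u p a \<le> band_sup u p (c *\<^sub>R a) / c"
      by (rule band_sup_least)
    then show "c * band_sup u p a \<le> band_sup u p (c *\<^sub>R a)"
      using c by (simp add: field_simps)
  qed
qed

end

lemma band_sup_add_functional:
  assumes "positive_functional p" "positive_functional q" "0 \<le> u"
  shows "band_sup u (p + q) z = band_sup u p z + band_sup u q z"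
proof (rule LIMSEQ_unique)
  show "(\<lambda>n. (p + q) (inf z (real n *\<^sub>R u))) \<longlonglongrightarrow> band_sup u (p + q) z"
    using assms by (intro band_sup_tendsto positive_functional_add)
  show "(\<lambda>n. (p + q) (inf z (real n *\<^sub>R u))) \<longlonglongrightarrow> band_sup u p z + band_sup u q z"
    unfolding plus_blinfun.rep_eq using assms by (intro tendsto_add band_sup_tendsto)
qed

lemma band_sup_scaleR_functional:
  assumes "positive_functional p" "0 \<le> c" "0 \<le> u"
  shows "band_sup u (c *\<^sub>R p) z = c * band_sup u p z"
proof (rule LIMSEQ_unique)
  show "(\<lambda>n. (c *\<^sub>R p) (inf z (real n *\<^sub>R u))) \<longlonglongrightarrow> band_sup u (c *\<^sub>R p) z"
    using assms by (intro band_sup_tendsto positive_functional_scaleR)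
  show "(\<lambda>n. (c *\<^sub>R p) (inf z (real n *\<^sub>R u))) \<longlonglongrightarrow> c * band_sup u p z"
    unfolding blinfun.scaleR_left using assms by (simp, intro tendsto_mult_left band_sup_tendsto)
qed

lemma sum_band_sup_le:
  assumes F: "finite F" and u: "\<And>k. k \<in> F \<Longrightarrow> 0 \<le> u k"
    and disjoint: "\<And>i j. i \<in> F \<Longrightarrow> j \<in> F \<Longrightarrow> i \<noteq> j \<Longrightarrow> inf (u i) (u j) = 0"
    and p: "positive_functional p" and z: "0 \<le> z"
  shows "(\<Sum>k\<in>F. band_sup (u k) p z) \<le> p z"
proof (rule LIMSEQ_le_const2)
  show "(\<lambda>n. \<Sum>k\<in>F. p (inf z (real n *\<^sub>R u k))) \<longlonglongrightarrow> (\<Sum>k\<in>F. band_sup (u k) p z)"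
    using u p by (intro tendsto_sum band_sup_tendsto)
  have "(\<Sum>k\<in>F. p (inf z (real n *\<^sub>R u k))) \<le> p z" for n
  proof -
    have "(\<Sum>k\<in>F. p (inf z (real n *\<^sub>R u k))) = p (inf z (\<Sum>k\<in>F. real n *\<^sub>R u k))"
      using F u disjoint z
      by (simp add: inf_sum_disjoint inf_scaleR_disjoint scaleR_nonneg_nonneg blinfun.sum_right)
    also have "\<dots> \<le> p z" by (rule positive_functional_mono[OF p inf_le1])
    finally show ?thesis .
  qed
  then show "\<exists>N. \<forall>n\<ge>N. (\<Sum>k\<in>F. p (inf z (real n *\<^sub>R u k))) \<le> p z"
    by blast
qed

definition band_part :: "'a::banach_lattice \<Rightarrow> ('a \<Rightarrow>\<^sub>L real) \<Rightarrow> 'a \<Rightarrow>\<^sub>L real" where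
  "band_part u p = cone_extension (band_sup u p)"

context
  fixes u :: "'a::banach_lattice" and p :: "'a \<Rightarrow>\<^sub>L real"
  assumes u: "0 \<le> u" and p: "positive_functional p"
begin

lemma cone_functional_band_sup: "cone_functional (band_sup u p) (norm p)"
proof
  show "band_sup u p a \<le> norm p * norm a" for a
    using band_sup_le[OF u p, of a] norm_blinfun[of p a] by simp
qed (simp_all add: band_sup_add[OF u p] band_sup_scaleR[OF u p] band_sup_nonneg[OF u p])

lemma positive_functional_band_part: "positive_functional (band_part u p)"
  unfolding band_part_def
  by (rule cone_functional.positive_functional_cone_extension[OF cone_functional_band_sup])

lemma band_part_eq: "0 \<le> a \<Longrightarrow> band_part u p a = band_sup u p a"
  unfolding band_part_def by (rule cone_functional.cone_extension_eq[OF cone_functional_band_sup])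

lemma abs_band_part_le: "\<bar>band_part u p y\<bar> \<le> band_sup u p (lmod y)"
  using positive_functional_abs_le[OF positive_functional_band_part, of y]
  by (simp add: band_part_eq lmod_nonneg)

lemma band_part_eq_self:
  assumes "lmod y \<le> u"
  shows "band_part u p y = p y"
proof -
  have "band_part u p a = p a" if "0 \<le> a" "a \<le> lmod y" for a
    using that assms band_sup_eq_self[OF u p, of 1 a] by (simp add: band_part_eq)
  then show ?thesis
    using blinfun_apply_prts[of "band_part u p" y] blinfun_apply_prts[of p y]
      pprt_le_lmod[of y] uminus_nprt_le_lmod[of y] by simp
qed

end

lemma band_part_add:
  "positive_functional p \<Longrightarrow> positive_functional q \<Longrightarrow> 0 \<le> u
    \<Longrightarrow> band_part u (p + q) = band_part u p + band_part u q"
  by (rule blinfun_eq_on_nonneg)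
    (simp add: band_part_eq positive_functional_add plus_blinfun.rep_eq band_sup_add_functional)

lemma band_part_scaleR:
  "positive_functional p \<Longrightarrow> 0 \<le> c \<Longrightarrow> 0 \<le> u \<Longrightarrow> band_part u (c *\<^sub>R p) = c *\<^sub>R band_part u p"
  by (rule blinfun_eq_on_nonneg)
    (simp add: band_part_eq positive_functional_scaleR band_sup_scaleR_functional
      blinfun.scaleR_left)

definition band_proj :: "'a::banach_lattice \<Rightarrow> ('a \<Rightarrow>\<^sub>L real) \<Rightarrow> 'a \<Rightarrow>\<^sub>L real" where
  "band_proj u h = band_part u (blinfun_pos h) - band_part u (blinfun_neg h)"

lemma band_proj_diff:
  assumes u: "0 \<le> u" and p: "positive_functional p" and q: "positive_functional q"
    and h: "h = p - q"
  shows "band_proj u h = band_part u p - band_part u q"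
proof -
  have "p + blinfun_neg h = blinfun_pos h + q"
    using h blinfun_pos_minus_neg[of h] by (simp add: algebra_simps)
  then have "band_part u p + band_part u (blinfun_neg h)
      = band_part u (blinfun_pos h) + band_part u q"
    using u p q positive_functional_blinfun_pos positive_functional_blinfun_neg
    by (metis band_part_add)
  then show ?thesis
    unfolding band_proj_def by (simp add: algebra_simps)
qed

lemma band_proj_add:
  assumes u: "0 \<le> u"
  shows "band_proj u (h + k) = band_proj u h + band_proj u k"
proof -
  have "h + k = (blinfun_pos h + blinfun_pos k) - (blinfun_neg h + blinfun_neg k)"
    using blinfun_pos_minus_neg[of h] blinfun_pos_minus_neg[of k] by (simp add: algebra_simps)
  then have "band_proj u (h + k)
      = band_part u (blinfun_pos h + blinfun_pos k) - band_part u (blinfun_neg h + blinfun_neg k)"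
    by (intro band_proj_diff u positive_functional_add positive_functional_blinfun_pos
        positive_functional_blinfun_neg)
  then show ?thesis
    unfolding band_proj_def
    by (simp add: band_part_add u positive_functional_blinfun_pos positive_functional_blinfun_neg)
qed

lemma band_proj_scaleR:
  assumes u: "0 \<le> u"
  shows "band_proj u (c *\<^sub>R h) = c *\<^sub>R band_proj u h"
proof (cases "0 \<le> c")
  case True
  have "c *\<^sub>R h = c *\<^sub>R blinfun_pos h - c *\<^sub>R blinfun_neg h"
    using blinfun_pos_minus_neg[of h] by (metis scaleR_diff_right)
  then have "band_proj u (c *\<^sub>R h)
      = band_part u (c *\<^sub>R blinfun_pos h) - band_part u (c *\<^sub>R blinfun_neg h)"
    by (intro band_proj_diff u positive_functional_scaleR positive_functional_blinfun_pos
        positive_functional_blinfun_neg True)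
  then show ?thesis
    unfolding band_proj_def
    by (simp add: band_part_scaleR u True positive_functional_blinfun_pos
        positive_functional_blinfun_neg scaleR_diff_right)
next
  case False
  then have c: "0 \<le> - c" by simp
  have "c *\<^sub>R h = (- c) *\<^sub>R blinfun_neg h - (- c) *\<^sub>R blinfun_pos h"
    using blinfun_pos_minus_neg[of h] by (metis minus_diff_eq scaleR_diff_right scaleR_minus_left
        scaleR_minus_right)
  then have "band_proj u (c *\<^sub>R h)
      = band_part u ((- c) *\<^sub>R blinfun_neg h) - band_part u ((- c) *\<^sub>R blinfun_pos h)"
    by (intro band_proj_diff u positive_functional_scaleR positive_functional_blinfun_pos
        positive_functional_blinfun_neg c)
  then show ?thesis
    unfolding band_proj_def
    by (simp only: band_part_scaleR u c positive_functional_blinfun_pos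
        positive_functional_blinfun_neg) (simp add: algebra_simps)
qed

lemma linear_band_proj: "0 \<le> u \<Longrightarrow> linear (band_proj u)"
  by (rule linearI) (simp_all add: band_proj_add band_proj_scaleR)

lemma abs_band_proj_le: "0 \<le> u \<Longrightarrow> \<bar>band_proj u h y\<bar> \<le> band_sup u (blinfun_abs h) (lmod y)"
  using abs_band_part_le[of u "blinfun_pos h" y] abs_band_part_le[of u "blinfun_neg h" y]
    band_sup_add_functional[of "blinfun_pos h" "blinfun_neg h" u "lmod y"]
  unfolding band_proj_def blinfun_abs_def minus_blinfun.rep_eq
  by (simp add: positive_functional_blinfun_pos positive_functional_blinfun_neg)

lemma band_proj_eq_self:
  assumes "lmod y \<le> u"
  shows "band_proj u h y = h y"
proof -
  have "0 \<le> u" using assms lmod_nonneg order_trans by blast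
  then have "band_proj u h y = blinfun_pos h y - blinfun_neg h y"
    unfolding band_proj_def minus_blinfun.rep_eq
    using assms by (simp add: band_part_eq_self positive_functional_blinfun_pos
        positive_functional_blinfun_neg)
  also have "\<dots> = h y"
    by (metis blinfun_pos_minus_neg minus_blinfun.rep_eq)
  finally show ?thesis .
qed

lemma dual_abs_le:
  fixes f :: "'a::banach_lattice \<Rightarrow>\<^sub>L real"
  assumes "0 \<le> x" and "\<And>y. lmod y \<le> x \<Longrightarrow> \<bar>f y\<bar> \<le> B"
  shows "dual_abs f x \<le> B"
proof -
  have "lmod (0::'a) \<le> x"
    using assms(1) by (simp add: lmod_eq_self)
  then have "\<bar>f 0\<bar> \<in> {\<bar>f y\<bar> | y. lmod y \<le> x}"
    by blast
  then show ?thesis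
    unfolding dual_abs_def using assms(2) by (intro cSup_least) auto
qed

lemma dual_abs_nonneg:
  fixes f :: "'a::banach_lattice \<Rightarrow>\<^sub>L real"
  assumes "0 \<le> x"
  shows "0 \<le> dual_abs f x"
proof -
  have "\<bar>f y\<bar> \<le> norm f * norm x" if "lmod y \<le> x" for y
    using norm_blinfun[of f y] norm_le_norm_if_lmod_le[OF that]
    by (simp add: order_trans mult_left_mono)
  then have bdd: "bdd_above {\<bar>f y\<bar> | y. lmod y \<le> x}"
    by (auto intro: bdd_aboveI[where M = "norm f * norm x"])
  have "lmod (0::'a) \<le> x"
    using assms by (simp add: lmod_eq_self)
  then have "\<bar>f 0\<bar> \<in> {\<bar>f y\<bar> | y. lmod y \<le> x}"
    by blast
  then show ?thesis
    unfolding dual_abs_def by (rule order_trans[OF abs_ge_zero cSup_upper[OF _ bdd]])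
qed

lemma dual_abs_band_proj_le:
  assumes "0 \<le> u" "0 \<le> x"
  shows "dual_abs (band_proj u h) x \<le> band_sup u (blinfun_abs h) x"
proof (rule dual_abs_le[OF assms(2)])
  fix y assume "lmod y \<le> x"
  have "\<bar>band_proj u h y\<bar> \<le> band_sup u (blinfun_abs h) (lmod y)"
    by (rule abs_band_proj_le[OF assms(1)])
  also have "\<dots> \<le> band_sup u (blinfun_abs h) x"
    by (rule band_sup_mono[OF assms(1) positive_functional_blinfun_abs \<open>lmod y \<le> x\<close>])
  finally show "\<bar>band_proj u h y\<bar> \<le> band_sup u (blinfun_abs h) x" .
qed

lemma Inf_image_eq_0:
  fixes F :: "'b \<Rightarrow> real"
  assumes nonneg: "\<And>y. y \<in> Y \<Longrightarrow> 0 \<le> F y" and small: "\<And>e. 0 < e \<Longrightarrow> \<exists>y\<in>Y. F y < e"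
  shows "Inf (F ` Y) = 0"
proof (rule antisym)
  have "Y \<noteq> {}" using small[of 1] by auto
  then show "0 \<le> Inf (F ` Y)" using nonneg by (intro cInf_greatest) auto
  have "bdd_below (F ` Y)" using nonneg by (rule bdd_belowI2)
  then have "Inf (F ` Y) \<le> 0 + e" if "0 < e" for e
    using small[OF that] by (auto intro: less_imp_le cInf_lower2)
  then show "Inf (F ` Y) \<le> 0" by (rule field_le_epsilon)
qed

lemma band_sup_split:
  assumes u: "0 \<le> u" and p: "positive_functional p" and x: "0 \<le> x" and e: "0 < e"
  obtains t w where "0 \<le> t" "0 \<le> w" "w \<le> x" "w \<le> t *\<^sub>R u" "band_sup u p (x - w) < e"
proof -
  have "(\<lambda>n. p (inf x (real n *\<^sub>R u))) \<longlonglongrightarrow> band_sup u p x"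
    by (rule band_sup_tendsto[OF u p])
  from LIMSEQ_D[OF this e] obtain n where "norm (p (inf x (real n *\<^sub>R u)) - band_sup u p x) < e"
    by blast
  then have n: "band_sup u p x - p (inf x (real n *\<^sub>R u)) < e"
    by simp
  define w where "w = inf x (real n *\<^sub>R u)"
  have w: "0 \<le> w" "w \<le> x" "w \<le> real n *\<^sub>R u"
    using x u unfolding w_def by (simp_all add: scaleR_nonneg_nonneg)
  have "band_sup u p x = band_sup u p (x - w) + band_sup u p w"
    using band_sup_add[OF u p, of "x - w" w] w by simp
  also have "band_sup u p w = p w"
    using w by (intro band_sup_eq_self[OF u p]) simp_all
  finally have "band_sup u p (x - w) < e"
    using n unfolding w_def by simp
  then show thesis
    using w by (intro that[of "real n" w]) simp_all
qed

lemma disjoint_dual_band_proj: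
  assumes u: "0 \<le> u" and v: "0 \<le> v" and uv: "inf u v = 0"
  shows "disjoint_dual (band_proj u h) (band_proj v k)"
  unfolding disjoint_dual_def
proof (intro allI impI)
  fix x :: 'a assume x: "0 \<le> x"
  let ?F = "\<lambda>y. dual_abs (band_proj u h) y + dual_abs (band_proj v k) (x - y)"
  have "Inf (?F ` {0..x}) = 0"
  proof (rule Inf_image_eq_0)
    show "0 \<le> ?F y" if "y \<in> {0..x}" for y
      using that by (simp add: dual_abs_nonneg add_nonneg_nonneg)
    fix e :: real assume "0 < e"
    with u x obtain t w where tw: "0 \<le> t" "0 \<le> w" "w \<le> x" "w \<le> t *\<^sub>R u"
        "band_sup u (blinfun_abs h) (x - w) < e"
      using positive_functional_blinfun_abs by (metis band_sup_split)
    have "dual_abs (band_proj u h) (x - w) < e"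
      using dual_abs_band_proj_le[OF u, of "x - w" h] tw by simp
    moreover have "dual_abs (band_proj v k) w \<le> 0"
      using dual_abs_band_proj_le[OF v tw(2), of k]
        band_sup_eq_zero[OF v positive_functional_blinfun_abs u _ tw(2,1,4), of k] uv
      by (simp add: inf_commute)
    ultimately show "\<exists>y\<in>{0..x}. ?F y < e"
      using tw by (intro bexI[of _ "x - w"]) simp_all
  qed
  moreover have "{?F y | y. 0 \<le> y \<and> y \<le> x} = ?F ` {0..x}"
    by auto
  ultimately show "Inf {?F y | y. 0 \<le> y \<and> y \<le> x} = 0"
    by simp
qed

lemma sum_abs_band_proj_le:
  fixes u :: "nat \<Rightarrow> 'a::banach_lattice" and \<phi> :: "('a \<Rightarrow>\<^sub>L real) \<Rightarrow>\<^sub>L real"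
  assumes u: "\<And>k. 0 \<le> u k" and disjoint: "\<And>i j. i \<noteq> j \<Longrightarrow> inf (u i) (u j) = 0"
    and F: "finite F"
  shows "(\<Sum>k\<in>F. \<bar>\<phi> (band_proj (u k) h)\<bar>) \<le> 3 * norm \<phi> * norm h"
proof -
  define g where "g = (\<Sum>k\<in>F. sgn (\<phi> (band_proj (u k) h)) *\<^sub>R band_proj (u k) h)"
  have "\<phi> g = (\<Sum>k\<in>F. sgn (\<phi> (band_proj (u k) h)) * \<phi> (band_proj (u k) h))"
    unfolding g_def by (simp add: blinfun.sum_right blinfun.scaleR_right)
  also have "\<dots> = (\<Sum>k\<in>F. \<bar>\<phi> (band_proj (u k) h)\<bar>)"
    by (simp add: abs_sgn mult.commute)
  finally have "\<phi> g = (\<Sum>k\<in>F. \<bar>\<phi> (band_proj (u k) h)\<bar>)" .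
  moreover have "norm g \<le> 3 * norm h"
  proof (rule norm_blinfun_bound)
    fix y
    have "norm (g y) \<le> (\<Sum>k\<in>F. \<bar>band_proj (u k) h y\<bar>)"
      unfolding g_def blinfun.sum_left blinfun.scaleR_left real_norm_def
      by (rule order_trans[OF sum_abs sum_mono]) (simp add: abs_mult abs_sgn_eq)
    also have "\<dots> \<le> (\<Sum>k\<in>F. band_sup (u k) (blinfun_abs h) (lmod y))"
      by (intro sum_mono abs_band_proj_le u)
    also have "\<dots> \<le> blinfun_abs h (lmod y)"
      using F u disjoint
      by (intro sum_band_sup_le positive_functional_blinfun_abs lmod_nonneg) auto
    also have "\<dots> \<le> 3 * norm h * norm y"
      using blinfun_abs_le[OF lmod_nonneg] by (simp add: norm_lmod)
    finally show "norm (g y) \<le> 3 * norm h * norm y" .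
  qed simp
  then have "\<phi> g \<le> norm \<phi> * (3 * norm h)"
    using norm_blinfun[of \<phi> g] mult_left_mono[of "norm g" "3 * norm h" "norm \<phi>"] by simp
  ultimately show ?thesis by simp
qed

section \<open>A gliding hump lemma\<close>

lemma eventually_abs_le_if_tendsto_zero:
  fixes g :: "nat \<Rightarrow> real"
  assumes "g \<longlonglongrightarrow> 0" "0 < e"
  shows "\<forall>\<^sub>F k in sequentially. \<bar>g k\<bar> \<le> e"
  using tendstoD[OF assms] by eventually_elim simp

lemma diagonal_subsequence:
  fixes a :: "nat \<Rightarrow> nat \<Rightarrow> real"
  assumes rows: "\<And>i. (\<lambda>j. a i j) \<longlonglongrightarrow> 0" and cols: "\<And>j. (\<lambda>i. a i j) \<longlonglongrightarrow> 0"
    and diag: "\<And>N. \<exists>n\<ge>N. \<delta> \<le> \<bar>a n n\<bar>" and \<epsilon>: "0 < \<epsilon>"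
  obtains r where "strict_mono r" "\<And>i. \<delta> \<le> \<bar>a (r i) (r i)\<bar>"
    "\<And>i j. i \<noteq> j \<Longrightarrow> \<bar>a (r i) (r j)\<bar> \<le> \<epsilon> * (1/2) ^ i"
proof -
  have "\<exists>y. \<delta> \<le> \<bar>a y y\<bar> \<and> x < y \<and> (\<forall>m\<le>x. \<bar>a m y\<bar> \<le> \<epsilon> * (1/2) ^ m)
      \<and> (\<forall>m\<le>x. \<bar>a y m\<bar> \<le> \<epsilon> * (1/2) ^ Suc n)" for x n
  proof -
    have "\<forall>\<^sub>F y in sequentially. x < y \<and> (\<forall>m\<in>{..x}. \<bar>a m y\<bar> \<le> \<epsilon> * (1/2) ^ m)
        \<and> (\<forall>m\<in>{..x}. \<bar>a y m\<bar> \<le> \<epsilon> * (1/2) ^ Suc n)"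
      using \<epsilon> by (intro eventually_conj eventually_gt_at_top eventually_ball_finite ballI
          eventually_abs_le_if_tendsto_zero rows cols) simp_all
    then obtain N where "\<And>y. N \<le> y \<Longrightarrow> x < y \<and> (\<forall>m\<in>{..x}. \<bar>a m y\<bar> \<le> \<epsilon> * (1/2) ^ m)
        \<and> (\<forall>m\<in>{..x}. \<bar>a y m\<bar> \<le> \<epsilon> * (1/2) ^ Suc n)"
      unfolding eventually_sequentially by blast
    with diag[of N] show ?thesis by auto
  qed
  then obtain r where r: "\<And>n. \<delta> \<le> \<bar>a (r n) (r n)\<bar>" "\<And>n. r n < r (Suc n)"
    "\<And>n m. m \<le> r n \<Longrightarrow> \<bar>a m (r (Suc n))\<bar> \<le> \<epsilon> * (1/2) ^ m"
    "\<And>n m. m \<le> r n \<Longrightarrow> \<bar>a (r (Suc n)) m\<bar> \<le> \<epsilon> * (1/2) ^ Suc n"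
    using dependent_nat_choice[of "\<lambda>_ y. \<delta> \<le> \<bar>a y y\<bar>"
        "\<lambda>n x y. x < y \<and> (\<forall>m\<le>x. \<bar>a m y\<bar> \<le> \<epsilon> * (1/2) ^ m)
          \<and> (\<forall>m\<le>x. \<bar>a y m\<bar> \<le> \<epsilon> * (1/2) ^ Suc n)"] diag[of 0]
    by metis
  have mono: "strict_mono r" using r(2) by (simp add: strict_mono_Suc_iff)
  have "\<bar>a (r i) (r j)\<bar> \<le> \<epsilon> * (1/2) ^ i" if "i \<noteq> j" for i j
  proof (cases "i < j")
    case True
    then obtain j' where j': "j = Suc j'" "i \<le> j'" by (cases j) auto
    then have "\<bar>a (r i) (r j)\<bar> \<le> \<epsilon> * (1/2) ^ r i"
      using mono by (simp add: r(3) strict_mono_less_eq)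
    also have "\<dots> \<le> \<epsilon> * (1/2) ^ i"
      using \<epsilon> seq_suble[OF mono, of i] by (intro mult_left_mono power_decreasing) simp_all
    finally show ?thesis .
  next
    case False
    with that obtain i' where i': "i = Suc i'" "j \<le> i'" by (cases i) auto
    then have "r j \<le> r i'"
      using mono by (simp add: strict_mono_less_eq)
    then show ?thesis
      unfolding i'(1) by (rule r(4))
  qed
  with mono r(1) show ?thesis by (rule that)
qed

lemma abs_suminf_minus_dominant_le:
  fixes b :: "nat \<Rightarrow> real"
  assumes "0 \<le> \<epsilon>" and small: "\<And>i. i \<noteq> j \<Longrightarrow> \<bar>b i\<bar> \<le> \<epsilon> * (1/2) ^ i"
  shows "\<bar>suminf b - b j\<bar> \<le> 2 * \<epsilon>"
proof -
  define b' where "b' i = (if i = j then 0 else b i)" for i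
  have bound: "\<bar>b' i\<bar> \<le> \<epsilon> * (1/2) ^ i" for i
    using small assms(1) by (simp add: b'_def)
  have geometric: "(\<lambda>i. \<epsilon> * (1/2::real) ^ i) sums (\<epsilon> * 2)"
    using sums_mult[OF geometric_sums[of "1/2::real"], of \<epsilon>] by simp
  have abs_summable: "summable (\<lambda>i. \<bar>b' i\<bar>)"
    by (rule summable_comparison_test'[OF sums_summable[OF geometric], where N = 0])
      (simp add: bound)
  have "(\<lambda>i. b' i + (if i = j then b j else 0)) sums (suminf b' + b j)"
    by (intro sums_add summable_sums[OF summable_rabs_cancel[OF abs_summable]] sums_single)
  moreover have "(\<lambda>i. b' i + (if i = j then b j else 0)) = b"
    by (auto simp: b'_def)
  ultimately have "suminf b - b j = suminf b'"
    by (simp add: sums_iff)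
  also have "\<bar>suminf b'\<bar> \<le> (\<Sum>i. \<bar>b' i\<bar>)"
    by (rule summable_rabs[OF abs_summable])
  also have "\<dots> \<le> \<epsilon> * 2"
    using suminf_le[OF bound abs_summable] geometric by (simp add: sums_iff)
  finally show ?thesis by simp
qed

lemma weighted_sum_functionals:
  fixes \<psi> :: "nat \<Rightarrow> 'v::real_normed_vector \<Rightarrow> real"
  assumes bound: "\<And>n. (\<Sum>k<n. \<bar>\<psi> k w\<bar>) \<le> C * norm w" and weights: "\<And>k. \<bar>s k\<bar> \<le> 1"
  shows "summable (\<lambda>k. s k * \<psi> k w)" and "\<bar>\<Sum>k. s k * \<psi> k w\<bar> \<le> C * norm w"
proof -
  have abs_summable: "summable (\<lambda>k. \<bar>\<psi> k w\<bar>)"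
    using bound by (intro summableI_nonneg_bounded) auto
  have le: "\<bar>s k * \<psi> k w\<bar> \<le> \<bar>\<psi> k w\<bar>" for k
    using weights[of k] by (simp add: abs_mult mult_left_le_one_le)
  have "summable (\<lambda>k. \<bar>s k * \<psi> k w\<bar>)"
    using le by (intro summable_comparison_test'[OF abs_summable, where N = 0]) simp
  then show "summable (\<lambda>k. s k * \<psi> k w)"
    by (rule summable_rabs_cancel)
  have "\<bar>\<Sum>k. s k * \<psi> k w\<bar> \<le> (\<Sum>k. \<bar>s k * \<psi> k w\<bar>)"
    by (rule summable_rabs) fact
  also have "\<dots> \<le> (\<Sum>k. \<bar>\<psi> k w\<bar>)"
    by (rule suminf_le[OF le]) fact+
  also have "\<dots> \<le> C * norm w"
    by (rule suminf_le_const[OF abs_summable bound])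
  finally show "\<bar>\<Sum>k. s k * \<psi> k w\<bar> \<le> C * norm w" .
qed

lemma bounded_linear_weighted_sum_functionals:
  fixes \<psi> :: "nat \<Rightarrow> 'v::real_normed_vector \<Rightarrow> real"
  assumes linear: "\<And>k. linear (\<psi> k)"
    and bound: "\<And>n w. (\<Sum>k<n. \<bar>\<psi> k w\<bar>) \<le> C * norm w" and weights: "\<And>k. \<bar>s k\<bar> \<le> 1"
  shows "bounded_linear (\<lambda>w. \<Sum>k. s k * \<psi> k w)"
proof (rule bounded_linear_intro[where K = C])
  have summable: "summable (\<lambda>k. s k * \<psi> k w)" for w
    using weighted_sum_functionals(1)[where \<psi> = \<psi> and s = s and w = w, OF bound weights] .
  show "(\<Sum>k. s k * \<psi> k (v + w)) = (\<Sum>k. s k * \<psi> k v) + (\<Sum>k. s k * \<psi> k w)" for v w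
  proof -
    have "(\<Sum>k. s k * \<psi> k (v + w)) = (\<Sum>k. s k * \<psi> k v + s k * \<psi> k w)"
      using linear by (simp add: linear_add distrib_left)
    also have "\<dots> = (\<Sum>k. s k * \<psi> k v) + (\<Sum>k. s k * \<psi> k w)"
      by (rule suminf_add[OF summable summable, symmetric])
    finally show ?thesis .
  qed
  show "(\<Sum>k. s k * \<psi> k (c *\<^sub>R v)) = c *\<^sub>R (\<Sum>k. s k * \<psi> k v)" for c v
    using linear suminf_mult[OF summable, of c] by (simp add: linear_scale algebra_simps)
  show "norm (\<Sum>k. s k * \<psi> k v) \<le> norm v * C" for v
    using weighted_sum_functionals(2)[where \<psi> = \<psi> and s = s and w = v, OF bound weights]
    by (simp add: mult.commute)
qed

lemma functional_detecting_diagonal: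
  fixes \<psi> :: "nat \<Rightarrow> 'v::real_normed_vector \<Rightarrow> real" and v :: "nat \<Rightarrow> 'v"
  assumes linear: "\<And>k. linear (\<psi> k)" and bound: "\<And>n w. (\<Sum>k<n. \<bar>\<psi> k w\<bar>) \<le> C * norm w"
    and diagonal: "\<And>j. \<delta> \<le> \<bar>\<psi> j (v j)\<bar>"
    and off_diagonal: "\<And>i j. i \<noteq> j \<Longrightarrow> \<bar>\<psi> i (v j)\<bar> \<le> \<delta> / 8 * (1/2) ^ i"
  obtains \<Phi> :: "'v \<Rightarrow>\<^sub>L real" where "\<And>j. 3 / 4 * \<delta> \<le> \<bar>\<Phi> (v j)\<bar>"
proof -
  define s where "s i = sgn (\<psi> i (v i))" for i
  have s: "\<bar>s i\<bar> \<le> 1" for i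
    by (simp add: s_def abs_sgn_eq)
  define \<Phi> where "\<Phi> w = (\<Sum>i. s i * \<psi> i w)" for w
  have "3 / 4 * \<delta> \<le> \<bar>\<Phi> (v j)\<bar>" for j
  proof -
    have "0 \<le> \<delta>"
      using order_trans[OF abs_ge_zero off_diagonal[of 1 0]] by simp
    have "\<bar>\<Phi> (v j) - s j * \<psi> j (v j)\<bar> \<le> 2 * (\<delta> / 8)"
      unfolding \<Phi>_def
    proof (rule abs_suminf_minus_dominant_le)
      show "\<bar>s i * \<psi> i (v j)\<bar> \<le> \<delta> / 8 * (1/2) ^ i" if "i \<noteq> j" for i
        using s[of i] off_diagonal[OF that] mult_left_le_one_le[of "\<bar>\<psi> i (v j)\<bar>" "\<bar>s i\<bar>"]
        by (simp add: abs_mult)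
    qed (use \<open>0 \<le> \<delta>\<close> in simp)
    moreover have "s j * \<psi> j (v j) = \<bar>\<psi> j (v j)\<bar>"
      by (simp add: s_def abs_sgn mult.commute)
    ultimately show ?thesis
      using diagonal[of j] by linarith
  qed
  moreover have "bounded_linear \<Phi>"
    unfolding \<Phi>_def using linear bound s by (rule bounded_linear_weighted_sum_functionals)
  ultimately show thesis
    using that[of "Blinfun \<Phi>"] by (simp add: bounded_linear_Blinfun_apply)
qed

lemma gliding_hump:
  fixes \<psi> :: "nat \<Rightarrow> 'v::real_normed_vector \<Rightarrow> real" and v :: "nat \<Rightarrow> 'v"
  assumes linear: "\<And>k. linear (\<psi> k)"
    and bound: "\<And>F w. finite F \<Longrightarrow> (\<Sum>k\<in>F. \<bar>\<psi> k w\<bar>) \<le> C * norm w"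
    and weakly_null: "\<And>\<Phi>::'v \<Rightarrow>\<^sub>L real. (\<lambda>k. \<Phi> (v k)) \<longlonglongrightarrow> 0"
  shows "(\<lambda>k. \<psi> k (v k)) \<longlonglongrightarrow> 0"
proof (rule ccontr)
  assume "\<not> (\<lambda>k. \<psi> k (v k)) \<longlonglongrightarrow> 0"
  then obtain \<delta> where \<delta>: "0 < \<delta>" "\<And>N. \<exists>n\<ge>N. \<delta> \<le> \<bar>\<psi> n (v n)\<bar>"
    unfolding LIMSEQ_iff by (auto simp: not_less)
  have "bounded_linear (\<psi> k)" for k
    using linear[of k] bound[of "{k}"]
    by (intro bounded_linear_intro[where K = C]) (auto simp: linear_add linear_scale mult.commute)
  then have rows: "(\<lambda>j. \<psi> i (v j)) \<longlonglongrightarrow> 0" for i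
    using weakly_null[of "Blinfun (\<psi> i)"] by (simp add: bounded_linear_Blinfun_apply)
  have cols: "(\<lambda>i. \<psi> i w) \<longlonglongrightarrow> 0" for w
    using weighted_sum_functionals(1)[of \<psi> w C "\<lambda>_. 1"] bound
    by (simp add: summable_LIMSEQ_zero)
  have "0 < \<delta> / 8" using \<delta>(1) by simp
  obtain r where r: "strict_mono r" "\<And>i. \<delta> \<le> \<bar>\<psi> (r i) (v (r i))\<bar>"
    "\<And>i j. i \<noteq> j \<Longrightarrow> \<bar>\<psi> (r i) (v (r j))\<bar> \<le> \<delta> / 8 * (1/2) ^ i"
    by (rule diagonal_subsequence[where a = "\<lambda>i j. \<psi> i (v j)", OF rows cols \<delta>(2) \<open>0 < \<delta> / 8\<close>]) auto
  have "(\<Sum>i<n. \<bar>\<psi> (r i) w\<bar>) \<le> C * norm w" for n w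
    using bound[of "r ` {..<n}" w] strict_mono_imp_inj_on[OF r(1)]
    by (simp add: sum.reindex inj_on_subset)
  with linear obtain \<Phi> :: "'v \<Rightarrow>\<^sub>L real" where \<Phi>: "\<And>j. 3 / 4 * \<delta> \<le> \<bar>\<Phi> (v (r j))\<bar>"
    using r(2,3) by (rule functional_detecting_diagonal) auto
  have "(\<lambda>j. \<Phi> (v (r j))) \<longlonglongrightarrow> 0"
    using LIMSEQ_subseq_LIMSEQ[OF weakly_null r(1)] by (simp add: o_def)
  then obtain j where "\<bar>\<Phi> (v (r j))\<bar> < 3 / 4 * \<delta>"
    using \<delta>(1) by (auto dest!: LIMSEQ_D[of _ 0 "3 / 4 * \<delta>"])
  with \<Phi>[of j] show False by simp
qed

lemma weakly_null_dual_apply: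
  fixes f :: "nat \<Rightarrow> ('a::banach_lattice \<Rightarrow>\<^sub>L real)"
  assumes "weakly_null_dual f"
  shows "(\<lambda>n. f n x) \<longlonglongrightarrow> 0"
  using assms[unfolded weakly_null_dual_def, rule_format, of "Blinfun (\<lambda>g. blinfun_apply g x)"]
  by (simp add: bounded_linear_Blinfun_apply blinfun.bounded_linear_left)

lemma weakly_null_dual_subseq:
  "weakly_null_dual f \<Longrightarrow> strict_mono r \<Longrightarrow> weakly_null_dual (\<lambda>k. f (r k))"
  unfolding weakly_null_dual_def using LIMSEQ_subseq_LIMSEQ by (auto simp: o_def)

lemma weakly_null_dual_band_proj:
  assumes u: "\<And>k. 0 \<le> u k" and disjoint: "\<And>i j. i \<noteq> j \<Longrightarrow> inf (u i) (u j) = 0"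
    and f: "weakly_null_dual f"
  shows "weakly_null_dual (\<lambda>k. band_proj (u k) (f k))"
  unfolding weakly_null_dual_def
proof
  fix \<phi> :: "('a \<Rightarrow>\<^sub>L real) \<Rightarrow>\<^sub>L real"
  show "(\<lambda>k. \<phi> (band_proj (u k) (f k))) \<longlonglongrightarrow> 0"
  proof (rule gliding_hump[where \<psi> = "\<lambda>k h. \<phi> (band_proj (u k) h)"])
    show "linear (\<lambda>h. \<phi> (band_proj (u k) h))" for k
      using linear_compose[OF linear_band_proj[OF u]
          bounded_linear.linear[OF blinfun.bounded_linear_right]]
      by (simp add: o_def)
    show "(\<Sum>k\<in>F. \<bar>\<phi> (band_proj (u k) h)\<bar>) \<le> 3 * norm \<phi> * norm h" if "finite F" for F h
      using u disjoint that by (rule sum_abs_band_proj_le)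
    show "(\<lambda>k. \<Phi> (f k)) \<longlonglongrightarrow> 0" for \<Phi> :: "('a \<Rightarrow>\<^sub>L real) \<Rightarrow>\<^sub>L real"
      using f unfolding weakly_null_dual_def by blast
  qed
qed

lemma not_unif_null_on_diagonal:
  fixes f :: "nat \<Rightarrow> ('a::banach_lattice \<Rightarrow>\<^sub>L real)" and x :: "nat \<Rightarrow> 'a"
  assumes pointwise: "\<And>m. (\<lambda>n. f n (x m)) \<longlonglongrightarrow> 0" and "\<not> unif_null_on f (range x)"
  obtains e and n m :: "nat \<Rightarrow> nat"
  where "0 < e" "strict_mono n" "strict_mono m" "\<And>k. e \<le> \<bar>f (n k) (x (m k))\<bar>"
proof -
  obtain e where e: "0 < e" "\<And>N. \<exists>n\<ge>N. \<exists>m. e \<le> \<bar>f n (x m)\<bar>"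
    using assms(2) unfolding unif_null_on_def eventually_sequentially by (auto simp: not_less)
  have "\<exists>q. e \<le> \<bar>f (fst q) (x (snd q))\<bar> \<and> fst p < fst q \<and> snd p < snd q" for p :: "nat \<times> nat"
  proof -
    have "\<forall>\<^sub>F n in sequentially. \<forall>m\<in>{..snd p}. \<bar>f n (x m)\<bar> < e"
      by (intro eventually_ball_finite ballI) (use tendstoD[OF pointwise e(1)] in simp_all)
    then obtain N where N: "\<And>n m. N \<le> n \<Longrightarrow> m \<le> snd p \<Longrightarrow> \<bar>f n (x m)\<bar> < e"
      unfolding eventually_sequentially by auto
    obtain n m where "max N (Suc (fst p)) \<le> n" "e \<le> \<bar>f n (x m)\<bar>"
      using e(2) by blast
    moreover from this have "snd p < m"
      using N[of n m] by (meson max.bounded_iff not_le not_less)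
    ultimately show ?thesis
      by (intro exI[of _ "(n, m)"]) auto
  qed
  then obtain s where s: "\<And>k. e \<le> \<bar>f (fst (s k)) (x (snd (s k)))\<bar>"
    "\<And>k. fst (s k) < fst (s (Suc k))" "\<And>k. snd (s k) < snd (s (Suc k))"
    using dependent_nat_choice[of "\<lambda>_ q. e \<le> \<bar>f (fst q) (x (snd q))\<bar>"
        "\<lambda>_ p q. fst p < fst q \<and> snd p < snd q"] e(2)[of 0]
    by (metis fst_conv snd_conv)
  show thesis
    using s by (intro that[of e "\<lambda>k. fst (s k)" "\<lambda>k. snd (s k)"] e(1))
      (simp_all add: strict_mono_Suc_iff)
qed

lemma band_projections_along_disjoint_sequence:
  fixes x :: "nat \<Rightarrow> 'a::banach_lattice"
  assumes disjoint: "\<forall>i j. i \<noteq> j \<longrightarrow> disjoint_elems (x i) (x j)"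
    and m: "inj m" and f: "weakly_null_dual f"
  shows "\<forall>i j. i \<noteq> j \<longrightarrow> disjoint_dual (band_proj (lmod (x (m i))) (f i))
      (band_proj (lmod (x (m j))) (f j))"
    and "weakly_null_dual (\<lambda>k. band_proj (lmod (x (m k))) (f k))"
proof -
  have inf_zero: "inf (lmod (x (m i))) (lmod (x (m j))) = 0" if "i \<noteq> j" for i j
    using disjoint injD[OF m] that unfolding disjoint_elems_def by blast
  then show "\<forall>i j. i \<noteq> j \<longrightarrow> disjoint_dual (band_proj (lmod (x (m i))) (f i))
      (band_proj (lmod (x (m j))) (f j))"
    by (intro allI impI disjoint_dual_band_proj lmod_nonneg)
  show "weakly_null_dual (\<lambda>k. band_proj (lmod (x (m k))) (f k))"
    using lmod_nonneg inf_zero f by (rule weakly_null_dual_band_proj)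
qed

theorem mainTheorem17:
  fixes x :: "nat \<Rightarrow> 'a::banach_lattice"
  assumes "\<forall>i j. i \<noteq> j \<longrightarrow> disjoint_elems (x i) (x j)"
    and "almost_DP_set (range x)"
  shows "DP_set (range x)"
  unfolding DP_set_def
proof (intro conjI allI impI)
  show "bounded (range x)"
    using assms(2) unfolding almost_DP_set_def by blast
  fix f :: "nat \<Rightarrow> ('a \<Rightarrow>\<^sub>L real)" assume f: "weakly_null_dual f"
  show "unif_null_on f (range x)"
  proof (rule ccontr)
    assume "\<not> unif_null_on f (range x)"
    then obtain e and n m :: "nat \<Rightarrow> nat" where nm: "0 < e" "strict_mono n" "strict_mono m"
      "\<And>k. e \<le> \<bar>f (n k) (x (m k))\<bar>"
      by (rule not_unif_null_on_diagonal[OF weakly_null_dual_apply[OF f]]) blast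
    let ?g = "\<lambda>k. band_proj (lmod (x (m k))) (f (n k))"
    have "unif_null_on g (range x)"
      if "\<forall>i j. i \<noteq> j \<longrightarrow> disjoint_dual (g i) (g j)" "weakly_null_dual g" for g
      using assms(2) that unfolding almost_DP_set_def by blast
    then have "unif_null_on ?g (range x)"
      using band_projections_along_disjoint_sequence[OF assms(1)
          strict_mono_imp_inj_on[OF nm(3)] weakly_null_dual_subseq[OF f nm(2)]] .
    then obtain k where "\<bar>?g k (x (m k))\<bar> < e"
      using nm(1) unfolding unif_null_on_def eventually_sequentially by blast
    with nm(4)[of k] show False
      by (simp add: band_proj_eq_self)
  qed
qed

end
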